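(* Let $\Omega_\star$ be a discrete filtered set centred at $\omega\in\mathbb{C}$ and let $H$ be an $\Omega_\star$-homotopy. Then there exist a good open covering $(I_i)_{0\le i\le n}$ of $[0,1]$ and positive real numbers $L_0,\dots,L_n$ such that for every $i=0,\dots,n$ and every $t\in I_i$, $H_t\in\mathfrak{R}_{\Omega_\star}(L_i)$, and for every $i=0,\dots,n-1$ and every $t\in I_i\cap I_{i+1}$, $H_t\in\mathfrak{R}_{\Omega_\star}(L_i)\cap\mathfrak{R}_{\Omega_\star}(L_{i+1})$.
   Context: A discrete filtered set centred at $\omega$ is a family $\Omega_\star=(\Omega_L)_{L>0}$ of finite subsets of $\mathbb{C}$ with $\Omega_L\subset D(\omega,L)$, $\Omega_{L_1}\subseteq\Omega_{L_2}$ for $L_1\le L_2$, and $\Omega_L=\{\omega\}$ for small $L>0$. For a path $\lambda:[a,a+l]\to\mathbb{C}$, $\underline\lambda(t)=\lambda(a+tl)$ is its standardization; $\mathcal{L}_\lambda$ is the length. $\mathfrak{R}_{\Omega_\star}(L)$ is the set of piecewise $\mathcal{C}^1$ paths $\lambda$ starting at $\omega$ with $\mathcal{L}_\lambda<L$ which are either constant or such that for some $t_0\in[0,1)$, $\underline\lambda([0,t_0])=\{\omega\}$ and $\underline\lambda((t_0,1])\subset D(\omega,L)\setminus\Omega_L$. A path is $\Omega_\star$-allowed if it is in $\mathfrak{R}_{\Omega_\star}(L)$ for some $L>0$. An $\Omega_\star$-homotopy is a continuous map $H:[0,1]^2\to\mathbb{C}$, $(s,t)\mapsto H_t(s)$,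 having a continuous partial derivative $\partial H/\partial s$, such that each path $H_t$ is $\Omega_\star$-allowed. A good open covering of $[0,1]$ is a finite covering by relatively open connected intervals with no triple intersections. *)

theory Defs
  imports "HOL-Complex_Analysis.Complex_Analysis"
begin

definition discrete_filtered_set :: "(real \<Rightarrow> complex set) \<Rightarrow> complex \<Rightarrow> bool" where
  "discrete_filtered_set Om w \<longleftrightarrow>
     (\<forall>L>0. finite (Om L) \<and> Om L \<subseteq> ball w L) \<and>
     (\<forall>L1 L2. 0 < L1 \<and> L1 \<le> L2 \<longrightarrow> Om L1 \<subseteq> Om L2) \<and>
     (\<exists>d>0. \<forall>L. 0 < L \<and> L \<le> d \<longrightarrow> Om L = {w})"

text \<open>Paths are represented by their standardization, i.e. as maps on [0,1].
  Length of a piecewise C1 path.\<close>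
definition path_len :: "(real \<Rightarrow> complex) \<Rightarrow> real" where
  "path_len g = integral {0..1} (\<lambda>t. norm (vector_derivative g (at t)))"

definition R_set :: "(real \<Rightarrow> complex set) \<Rightarrow> complex \<Rightarrow> real \<Rightarrow> (real \<Rightarrow> complex) \<Rightarrow> bool" where
  "R_set Om w L g \<longleftrightarrow>
     valid_path g \<and> pathstart g = w \<and> path_len g < L \<and>
     ((\<forall>t\<in>{0..1}. g t = g 0) \<or>
      (\<exists>t0. 0 \<le> t0 \<and> t0 < 1 \<and> g ` {0..t0} = {w} \<and> g ` {t0<..1} \<subseteq> ball w L - Om L))"

definition allowed :: "(real \<Rightarrow> complex set) \<Rightarrow> complex \<Rightarrow> (real \<Rightarrow> complex) \<Rightarrow> bool" where
  "allowed Om w g \<longleftrightarrow> (\<exists>L>0. R_set Om w L g)"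

definition Omega_homotopy :: "(real \<Rightarrow> complex set) \<Rightarrow> complex \<Rightarrow> (real \<Rightarrow> real \<Rightarrow> complex) \<Rightarrow> bool" where
  "Omega_homotopy Om w H \<longleftrightarrow>
     continuous_on ({0..1} \<times> {0..1}) (\<lambda>(s,t). H t s) \<and>
     (\<exists>D. continuous_on ({0..1} \<times> {0..1}) (\<lambda>(s,t). D t s) \<and>
          (\<forall>s\<in>{0..1}. \<forall>t\<in>{0..1}. ((\<lambda>s'. H t s') has_vector_derivative D t s) (at s within {0..1}))) \<and>
     (\<forall>t\<in>{0..1}. allowed Om w (H t))"

definition good_open_covering :: "nat \<Rightarrow> (nat \<Rightarrow> real set) \<Rightarrow> bool" where
  "good_open_covering n I \<longleftrightarrow>
     (\<forall>i\<le>n. I i \<noteq> {} \<and> openin (top_of_set {0..1}) (I i) \<and> connected (I i)) \<and>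
     (\<Union>i\<le>n. I i) = {0..1} \<and>
     (\<forall>i j k. i \<le> n \<and> j \<le> n \<and> k \<le> n \<and> i \<noteq> j \<and> j \<noteq> k \<and> i \<noteq> k \<longrightarrow> I i \<inter> I j \<inter> I k = {})"

end

(* For fixed L, the parameters t with H_t in R(L) form a relatively open subset of [0,1]:
   among allowed paths, membership means that the length is < L, which depends continuously
   on t because the s-derivative of H does, and that the trace avoids the closed set
   (C - D(w,L)) \<union> (\<Omega>_L - {w}), which persists for nearby t by the tube lemma.
   These open sets cover [0,1]; if 1/N is below a Lebesgue number of this cover, the
   intervals ((i-1)/N, (i+1)/N) \<inter> [0,1], i = 0..N, form a good open covering each of whose
   members lies in one of them. *)

theory Submission
  imports Defs
begin

lemma centre_mem_discrete_filtered_set: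
  assumes "discrete_filtered_set Om w" "L > 0"
  shows "w \<in> Om L"
proof -
  from assms(1) obtain d where "d > 0" and small: "\<forall>L. 0 < L \<and> L \<le> d \<longrightarrow> Om L = {w}"
    and mono: "\<forall>L1 L2. 0 < L1 \<and> L1 \<le> L2 \<longrightarrow> Om L1 \<subseteq> Om L2"
    unfolding discrete_filtered_set_def by blast
  have "Om (min d L) = {w}"
    using \<open>d > 0\<close> small assms(2) by simp
  moreover have "Om (min d L) \<subseteq> Om L"
    using \<open>d > 0\<close> mono assms(2) by simp
  ultimately show ?thesis by auto
qed

definition obstacle :: "(real \<Rightarrow> complex set) \<Rightarrow> complex \<Rightarrow> real \<Rightarrow> complex set" where
  "obstacle Om w L = - ball w L \<union> (Om L - {w})"

lemma closed_obstacle: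
  assumes "discrete_filtered_set Om w" "L > 0"
  shows "closed (obstacle Om w L)"
  using assms unfolding obstacle_def discrete_filtered_set_def
  by (intro closed_Un closed_Compl open_ball finite_imp_closed) auto

lemma R_set_iff_avoids_obstacle:
  assumes Om: "discrete_filtered_set Om w" and "allowed Om w g" and "L > 0"
  shows "R_set Om w L g \<longleftrightarrow> path_len g < L \<and> (\<forall>s\<in>{0..1}. g s \<notin> obstacle Om w L)"
proof
  assume R: "R_set Om w L g"
  then have g0: "g 0 = w" unfolding R_set_def pathstart_def by simp
  have "g s \<notin> obstacle Om w L" if s: "s \<in> {0..1}" for s
    using R unfolding R_set_def
  proof (elim conjE disjE exE)
    assume "\<forall>t\<in>{0..1}. g t = g 0"
    then show ?thesis using s g0 \<open>L > 0\<close> unfolding obstacle_def by auto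
  next
    fix t0 assume "g ` {0..t0} = {w}" "g ` {t0<..1} \<subseteq> ball w L - Om L"
    then have "g s = w \<or> g s \<in> ball w L - Om L"
      using s by (cases "s \<le> t0") (auto simp: image_subset_iff)
    then show ?thesis
      using \<open>L > 0\<close> unfolding obstacle_def by auto
  qed
  moreover have "path_len g < L"
    using R by (simp add: R_set_def)
  ultimately show "path_len g < L \<and> (\<forall>s\<in>{0..1}. g s \<notin> obstacle Om w L)"
    by blast
next
  assume len: "path_len g < L \<and> (\<forall>s\<in>{0..1}. g s \<notin> obstacle Om w L)"
  obtain L' where "L' > 0" and R': "R_set Om w L' g"
    using assms(2) unfolding allowed_def by blast
  then have "w \<in> Om L'" using centre_mem_discrete_filtered_set[OF Om] by blast
  have "(\<forall>t\<in>{0..1}. g t = g 0) \<or>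
        (\<exists>t0. 0 \<le> t0 \<and> t0 < 1 \<and> g ` {0..t0} = {w} \<and> g ` {t0<..1} \<subseteq> ball w L - Om L)"
    using R' unfolding R_set_def
  proof (elim conjE disjE exE)
    fix t0 assume t0: "0 \<le> t0" "t0 < 1" "g ` {0..t0} = {w}" "g ` {t0<..1} \<subseteq> ball w L' - Om L'"
    have "g s \<in> ball w L - Om L" if s: "s \<in> {t0<..1}" for s
    proof -
      \<comment> \<open>after \<open>t0\<close> the path misses \<open>Om L'\<close>, which contains \<open>w\<close>\<close>
      have "g s \<noteq> w" using t0(4) s \<open>w \<in> Om L'\<close> by blast
      moreover have "g s \<notin> obstacle Om w L" using len s t0(1) by simp
      ultimately show ?thesis unfolding obstacle_def by simp
    qed
    then show ?thesis using t0 by blast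
  qed blast
  then show "R_set Om w L g"
    using len R' by (simp add: R_set_def)
qed

lemma path_len_eq_integral:
  assumes "\<forall>s\<in>{0..1}. (g has_vector_derivative D s) (at s within {0..1})"
  shows "path_len g = integral {0..1} (\<lambda>s. norm (D s))"
  unfolding path_len_def
proof (rule integral_spike[of "{0,1}"])
  fix s assume s: "s \<in> {0..1} - {0::real,1}"
  then have "at s within {0..1} = at s" by (simp add: at_within_Icc_at)
  then have "(g has_vector_derivative D s) (at s)" using assms s by force
  then show "norm (D s) = norm (vector_derivative g (at s))"
    by (simp add: vector_derivative_at)
qed simp

lemma continuous_on_path_len_family:
  assumes contD: "continuous_on ({0..1} \<times> {0..1}) (\<lambda>(s,t). D t s)"
    and der: "\<forall>s\<in>{0..1}. \<forall>t\<in>{0..1}. (H t has_vector_derivative D t s) (at s within {0..1})"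
  shows "continuous_on {0..1} (\<lambda>t. path_len (H t))"
proof -
  have "continuous_on ({0..1} \<times> {0..1}) (\<lambda>(t,s). D t s)"
    using continuous_on_swap_args[OF contD] by simp
  then have "continuous_on ({0..1} \<times> cbox 0 1) (\<lambda>(t,s). norm (D t s))"
    unfolding cbox_interval case_prod_unfold by (rule continuous_on_norm)
  then have cont: "continuous_on {0..1} (\<lambda>t. integral (cbox 0 1) (\<lambda>s. norm (D t s)))"
    using integral_continuous_on_param[where f="\<lambda>t s. norm (D t s)"] by simp
  have eq: "path_len (H t) = integral (cbox 0 1) (\<lambda>s. norm (D t s))" if "t \<in> {0..1}" for t
    unfolding cbox_interval using der that by (intro path_len_eq_integral) blast
  show ?thesis
    by (rule continuous_on_eq[OF cont]) (simp add: eq)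
qed

lemma openin_slices_avoiding_closed:
  fixes S :: "'a::euclidean_space set" and T :: "'b::euclidean_space set"
  assumes "compact S" "continuous_on (S \<times> T) F" "closed C"
  shows "openin (top_of_set T) {t\<in>T. \<forall>s\<in>S. F (s,t) \<notin> C}"
proof (cases "S = {}")
  case False
  have U: "openin (top_of_set (S \<times> T)) ((S \<times> T) \<inter> F -` (- C))"
    using assms by (intro continuous_openin_preimage_gen) auto
  show ?thesis
  proof (subst openin_subopen, intro ballI)
    fix t assume "t \<in> {t\<in>T. \<forall>s\<in>S. F (s,t) \<notin> C}"
    then have "(\<lambda>s. (s,t)) ` S \<subseteq> (S \<times> T) \<inter> F -` (- C)" by auto
    then obtain V where V: "openin (top_of_set T) V" "t \<in> V" "S \<times> V \<subseteq> (S \<times> T) \<inter> F -` (- C)"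
      using tube_lemma[OF \<open>compact S\<close> False _ U] by metis
    then have "V \<subseteq> {t\<in>T. \<forall>s\<in>S. F (s,t) \<notin> C}"
      using openin_subset[OF V(1)] by auto
    then show "\<exists>V. openin (top_of_set T) V \<and> t \<in> V \<and> V \<subseteq> {t\<in>T. \<forall>s\<in>S. F (s,t) \<notin> C}"
      using V by blast
  qed
qed simp

lemma openin_R_set_homotopy:
  assumes Om: "discrete_filtered_set Om w" and hom: "Omega_homotopy Om w H" and "L > 0"
  shows "openin (top_of_set {0..1}) {t\<in>{0..1}. R_set Om w L (H t)}"
proof -
  obtain D where contH: "continuous_on ({0..1} \<times> {0..1}) (\<lambda>(s,t). H t s)"
    and contD: "continuous_on ({0..1} \<times> {0..1}) (\<lambda>(s,t). D t s)"
    and der: "\<forall>s\<in>{0..1}. \<forall>t\<in>{0..1}. (H t has_vector_derivative D t s) (at s within {0..1})"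
    and allowed: "\<forall>t\<in>{0..1}. allowed Om w (H t)"
    using hom unfolding Omega_homotopy_def by blast
  have "openin (top_of_set {0..1}) ({0..1} \<inter> (\<lambda>t. path_len (H t)) -` {..<L})"
    by (intro continuous_openin_preimage_gen continuous_on_path_len_family[OF contD der]) simp
  moreover have "openin (top_of_set {0..1}) {t\<in>{0..1}. \<forall>s\<in>{0..1}. H t s \<notin> obstacle Om w L}"
    using openin_slices_avoiding_closed[OF _ contH closed_obstacle[OF Om \<open>L > 0\<close>]] by simp
  ultimately have "openin (top_of_set {0..1})
      ({0..1} \<inter> (\<lambda>t. path_len (H t)) -` {..<L} \<inter> {t\<in>{0..1}. \<forall>s\<in>{0..1}. H t s \<notin> obstacle Om w L})"
    by (rule openin_Int)
  moreover have "{t\<in>{0..1}. R_set Om w L (H t)} =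
      {0..1} \<inter> (\<lambda>t. path_len (H t)) -` {..<L} \<inter> {t\<in>{0..1}. \<forall>s\<in>{0..1}. H t s \<notin> obstacle Om w L}"
    using R_set_iff_avoids_obstacle[OF Om _ \<open>L > 0\<close>] allowed by auto
  ultimately show ?thesis by simp
qed

definition mesh_interval :: "nat \<Rightarrow> nat \<Rightarrow> real set" where
  "mesh_interval N i = {0..1} \<inter> {(real i - 1) / N <..< (real i + 1) / N}"

lemma mem_mesh_interval_iff:
  assumes "N > 0"
  shows "x \<in> mesh_interval N i \<longleftrightarrow> x \<in> {0..1} \<and> \<bar>x * N - i\<bar> < 1"
  using assms by (auto simp: mesh_interval_def field_simps)

lemma mesh_interval_subset_ball:
  assumes "N > 0"
  shows "mesh_interval N i \<subseteq> ball (i / N) (1 / N)"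
proof
  fix x assume "x \<in> mesh_interval N i"
  then have "\<bar>x * N - i\<bar> / N < 1 / N"
    using assms by (simp add: mem_mesh_interval_iff divide_strict_right_mono)
  moreover have "\<bar>x * N - i\<bar> / N = dist (i / N) x"
    using assms by (simp add: dist_real_def field_simps flip: abs_div_pos)
  ultimately show "x \<in> ball (i / N) (1 / N)" by simp
qed

lemma good_open_covering_mesh_interval:
  assumes "N > 0"
  shows "good_open_covering N (mesh_interval N)"
  unfolding good_open_covering_def
proof (intro conjI allI impI)
  fix i assume "i \<le> N"
  then have "real i / N \<in> mesh_interval N i"
    using assms by (simp add: mem_mesh_interval_iff)
  then show "mesh_interval N i \<noteq> {}" by blast
  show "openin (top_of_set {0..1}) (mesh_interval N i)"
    unfolding mesh_interval_def by (intro openin_open_Int open_greaterThanLessThan)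
  show "connected (mesh_interval N i)"
    unfolding mesh_interval_def by (intro convex_connected convex_Int convex_real_interval)
next
  have "x \<in> mesh_interval N (nat \<lfloor>x * N\<rfloor>)" "nat \<lfloor>x * N\<rfloor> \<le> N" if "x \<in> {0..1}" for x :: real
  proof -
    have "0 \<le> x * N" "x * N \<le> N" using that by (auto simp: mult_left_le_one_le)
    then have "\<lfloor>x * N\<rfloor> \<le> \<lfloor>real N\<rfloor>" by (intro floor_mono)
    then show "nat \<lfloor>x * N\<rfloor> \<le> N" by simp
    show "x \<in> mesh_interval N (nat \<lfloor>x * N\<rfloor>)"
      using that assms \<open>0 \<le> x * N\<close> by (simp add: mem_mesh_interval_iff) linarith
  qed
  then have "{0..1} \<subseteq> (\<Union>i\<le>N. mesh_interval N i)" by blast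
  moreover have "(\<Union>i\<le>N. mesh_interval N i) \<subseteq> {0..1}"
    unfolding mesh_interval_def by blast
  ultimately show "(\<Union>i\<le>N. mesh_interval N i) = {0..1}" by (rule antisym[rotated])
next
  fix i j k assume "i \<le> N \<and> j \<le> N \<and> k \<le> N \<and> i \<noteq> j \<and> j \<noteq> k \<and> i \<noteq> k"
  moreover have False
    if "\<bar>x * N - i\<bar> < 1" "\<bar>x * N - j\<bar> < 1" "\<bar>x * N - k\<bar> < 1" "i \<noteq> j" "j \<noteq> k" "i \<noteq> k"
    for x :: real
  proof -
    have "i < j + 2" "j < i + 2" "i < k + 2" "k < i + 2" "j < k + 2" "k < j + 2"
      using that(1-3) by linarith+
    then show False using that(4-6) by linarith
  qed
  ultimately show "mesh_interval N i \<inter> mesh_interval N j \<inter> mesh_interval N k = {}"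
    using assms by (auto simp: mem_mesh_interval_iff)
qed

lemma good_open_covering_refinement:
  assumes cover: "{0..1} \<subseteq> (\<Union>x\<in>X. U x)"
    and U: "\<And>x. x \<in> X \<Longrightarrow> openin (top_of_set {0..1}) (U x)"
  shows "\<exists>n I L. good_open_covering n I \<and> (\<forall>i\<le>n. L i \<in> X \<and> I i \<subseteq> U (L i))"
proof -
  have "\<forall>x\<in>X. \<exists>V. open V \<and> U x = {0..1} \<inter> V"
    using U by (simp add: openin_open)
  then obtain V where V: "\<forall>x\<in>X. open (V x) \<and> U x = {0..1} \<inter> V x"
    by (rule bchoice[elim_format]) blast
  have "{0..1} \<subseteq> \<Union>(V ` X)"
    using cover V by blast
  then obtain \<epsilon> where "0 < \<epsilon>" and \<epsilon>: "\<And>t. t \<in> {0..1} \<Longrightarrow> \<exists>G \<in> V ` X. ball t \<epsilon> \<subseteq> G"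
    using Heine_Borel_lemma[OF compact_Icc, where \<G>="V ` X"] V by blast
  obtain N :: nat where N: "1 / \<epsilon> < N"
    using reals_Archimedean2 by blast
  moreover have "0 < 1 / \<epsilon>"
    using \<open>0 < \<epsilon>\<close> by simp
  ultimately have "real N > 0"
    by linarith
  then have "N > 0" "1 / N < \<epsilon>"
    using N \<open>0 < \<epsilon>\<close> by (simp_all add: field_simps)
  have "\<exists>x\<in>X. mesh_interval N i \<subseteq> U x" if "i \<le> N" for i
  proof -
    have "real i / N \<in> {0..1}"
      using that \<open>N > 0\<close> by simp
    then obtain x where "x \<in> X" and ball: "ball (i / N) \<epsilon> \<subseteq> V x"
      using \<epsilon> by blast
    have "mesh_interval N i \<subseteq> {0..1} \<inter> ball (i / N) \<epsilon>"
      using mesh_interval_subset_ball[OF \<open>N > 0\<close>, of i] \<open>1 / N < \<epsilon>\<close>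
      by (auto simp: mesh_interval_def)
    also have "\<dots> \<subseteq> U x"
      using ball V \<open>x \<in> X\<close> by blast
    finally show ?thesis
      using \<open>x \<in> X\<close> by blast
  qed
  then have "\<forall>i\<in>{..N}. \<exists>x\<in>X. mesh_interval N i \<subseteq> U x"
    by simp
  then obtain L where "\<forall>i\<in>{..N}. L i \<in> X \<and> mesh_interval N i \<subseteq> U (L i)"
    using bchoice[of "{..N}" "\<lambda>i x. x \<in> X \<and> mesh_interval N i \<subseteq> U x"] by blast
  with good_open_covering_mesh_interval[OF \<open>N > 0\<close>] show ?thesis
    by (intro exI[of _ N] exI[of _ "mesh_interval N"] exI[of _ L]) simp
qed

theorem lemma2p8:
  fixes Om :: "real \<Rightarrow> complex set" and w :: complex and H :: "real \<Rightarrow> real \<Rightarrow> complex"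
  assumes "discrete_filtered_set Om w"
    and "Omega_homotopy Om w H"
  shows "\<exists>n I L. good_open_covering n I \<and> (\<forall>i\<le>n. L i > (0::real)) \<and>
           (\<forall>i\<le>n. \<forall>t\<in>I i. R_set Om w (L i) (H t)) \<and>
           (\<forall>i<n. \<forall>t\<in>I i \<inter> I (Suc i). R_set Om w (L i) (H t) \<and> R_set Om w (L (Suc i)) (H t))"
proof -
  let ?U = "\<lambda>L. {t\<in>{0..1}. R_set Om w L (H t)}"
  have "{0..1} \<subseteq> (\<Union>L\<in>{L. L > 0}. ?U L)"
    using assms(2) unfolding Omega_homotopy_def allowed_def by blast
  moreover have "openin (top_of_set {0..1}) (?U L)" if "L \<in> {L. L > 0}" for L
    using openin_R_set_homotopy[OF assms] that by simp
  ultimately obtain n I L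
    where cov: "good_open_covering n I" and L: "\<forall>i\<le>n. L i > 0 \<and> I i \<subseteq> ?U (L i)"
    using good_open_covering_refinement[where X="{L. L > 0}" and U="?U"] by blast
  then have R: "\<forall>i\<le>n. \<forall>t\<in>I i. R_set Om w (L i) (H t)"
    by blast
  then have "\<forall>i<n. \<forall>t\<in>I i \<inter> I (Suc i). R_set Om w (L i) (H t) \<and> R_set Om w (L (Suc i)) (H t)"
    by (auto simp: Suc_le_eq)
  with cov L R show ?thesis
    by (intro exI[of _ n] exI[of _ I] exI[of _ L]) blast
qed

end
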